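(* Let $m \geq 3$ be an integer, and for $n \geq 1$ let $$\Omega(n \gamma_{c}) = \frac{m}{(m-1)^2 n^2}\sum_{d\mid n} (-1)^{m d + 1}\, \mu\!\left(\frac{n}{d} \right) \binom{(m-1)^2 d}{d},$$ where $\mu$ is the Möbius function. Then, as $n \to \infty$, $$\Omega(n \gamma_{c}) \sim (-1)^{m n + 1} \left( \frac{1}{m-1} \sqrt{\frac{m}{2\pi (m-2)}} \right) n^{-5/2} e^{c_{m} n},$$ i.e. the ratio of the two sides tends to $1$, where $$c_{m} = (m-1)^2 \log \bigl[ (m-1)^2 \bigr] - m (m-2) \log \bigl[ m (m-2) \bigr].$$
   Context: In the paper, $\Omega(n\gamma_c)$ is the BPS index of charge $n\gamma_c$ associated with an $m$-herd spectral network (equivalently, the Donaldson–Thomas invariant of the $m$-Kronecker quiver for dimension vector $(n,n)$ in the wild stability chamber); it is given by the displayed closed formula, which is all the statement uses. *)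

theory Defs
  imports "HOL-Analysis.Analysis" "HOL-Computational_Algebra.Squarefree"
begin

definition moebius_mu :: "nat \<Rightarrow> int" where
  "moebius_mu n = (if squarefree n then (-1) ^ card (prime_factors n) else 0)"

definition Omega_herd :: "nat \<Rightarrow> nat \<Rightarrow> real" where
  "Omega_herd m n =
     real m / (real ((m - 1)^2) * real (n^2)) *
     (\<Sum>d | d dvd n. (-1) ^ (m * d + 1) * real_of_int (moebius_mu (n div d))
                      * real (((m - 1)^2 * d) choose d))"

definition c_herd :: "nat \<Rightarrow> real" where
  "c_herd m = real ((m - 1)^2) * ln (real ((m - 1)^2)) - real (m * (m - 2)) * ln (real (m * (m - 2)))"

end

theory Submission
  imports Defs "HOL-Real_Asymp.Real_Asymp"
begin

text \<open>Write k = (m-1)^2 and j = m(m-2) = k - 1, so that c_m = k log k - j log j. In the divisor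
  sum the term d = n dominates: by Stirling's formula binom(kn, n) is asymptotic to
  sqrt(k / (2 pi j n)) e^(c_m n), whereas every proper divisor satisfies d <= n/2, and the entropy
  bound binom(kd, d) <= e^(c_m d) (one term of the binomial expansion of (1/k + j/k)^(kd)) makes the
  remaining at most n terms O(n e^(c_m n / 2)). Stirling's formula itself follows because the
  increments of log(n! / (sqrt n (n/e)^n)) are O(1/n^2), so the ratio converges; its limit is
  identified through the central binomial coefficient, since binom(2n, n) 4^(-n) = (-1)^n binom(-1/2, n)
  behaves like 1 / sqrt(pi n) by the generalised binomial asymptotics and Gamma(1/2) = sqrt pi.\<close>

lemma convergent_if_summable_diffs:
  fixes f :: "nat \<Rightarrow> real"
  assumes "summable (\<lambda>n. f (Suc n) - f n)"
  shows "convergent f"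
proof -
  have "convergent (\<lambda>n. (\<Sum>i<n. f (Suc i) - f i) + f 0)"
    using assms by (intro convergent_add convergent_const) (simp add: summable_iff_convergent)
  thus ?thesis by (simp add: sum_lessThan_telescope)
qed

lemma central_binomial_limit: "(\<lambda>n. real ((2*n) choose n) * sqrt (real n) / 4 ^ n) \<longlonglongrightarrow> 1 / sqrt pi"
proof -
  have gchoose: "(- (1/2) :: real) gchoose n = (-1) ^ n * real ((2*n) choose n) / 4 ^ n" for n
  proof -
    have "(fact (2*n) :: real) = 4 ^ n * pochhammer (1/2) n * fact n"
      using pochhammer_double[of "1/2 :: real" n] by (simp add: pochhammer_fact power_mult)
    thus ?thesis
      by (simp add: gbinomial_pochhammer binomial_fact field_simps)
  qed
  have "(\<lambda>n. ((- (1/2) :: real) gchoose n) / ((-1) ^ n / exp ((- (1/2) + 1) * ln (real n)))) \<longlonglongrightarrow> 1 / sqrt pi"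
    using gbinomial_asymptotic[of "- (1/2) :: real"] by (simp add: Gamma_one_half_real inverse_eq_divide)
  moreover have "eventually (\<lambda>n. ((- (1/2) :: real) gchoose n) / ((-1) ^ n / exp ((- (1/2) + 1) * ln (real n)))
                   = real ((2*n) choose n) * sqrt (real n) / 4 ^ n) at_top"
    using eventually_ge_at_top[of 1]
  proof eventually_elim
    case (elim n)
    hence "exp ((- (1/2) + 1) * ln (real n)) = sqrt (real n)"
      by (simp add: ln_sqrt[symmetric])
    thus ?case by (simp add: gchoose)
  qed
  ultimately show ?thesis by (rule Lim_transform_eventually)
qed

definition stirling_ratio :: "nat \<Rightarrow> real" where
  "stirling_ratio n = fact n / (sqrt (real n) * (real n / exp 1) ^ n)"

lemma stirling_ratio_pos: "n \<ge> 1 \<Longrightarrow> stirling_ratio n > 0"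
  by (simp add: stirling_ratio_def)

lemma fact_eq_stirling_ratio:
  "n \<ge> 1 \<Longrightarrow> (fact n :: real) = stirling_ratio n * sqrt (real n) * (real n / exp 1) ^ n"
  by (simp add: stirling_ratio_def)

lemma ln_stirling_ratio_Suc:
  assumes "n \<ge> 1"
  shows "ln (stirling_ratio (Suc n)) - ln (stirling_ratio n)
           = 1 - (real n + 1/2) * (ln (real n + 1) - ln (real n))"
proof -
  have ln_sr: "ln (stirling_ratio k) = ln (fact k) - ln (real k) / 2 - real k * (ln (real k) - 1)"
    if "k \<ge> 1" for k
    using that by (simp add: stirling_ratio_def ln_div ln_mult ln_realpow ln_sqrt algebra_simps)
  have "ln (fact (Suc n) :: real) = ln (real n + 1) + ln (fact n)"
    by (simp add: ln_mult_pos add.commute)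
  thus ?thesis using assms by (simp add: ln_sr algebra_simps)
qed

lemma stirling_ratio_convergent: obtains S where "stirling_ratio \<longlonglongrightarrow> S" "S > 0"
proof -
  have "(\<lambda>n. 1 - (real n + 1/2) * (ln (real n + 1) - ln (real n))) \<in> O(\<lambda>n. inverse (real n ^ 2))"
    by real_asymp
  moreover have "eventually (\<lambda>n. ln (stirling_ratio (Suc n)) - ln (stirling_ratio n) =
                     1 - (real n + 1/2) * (ln (real n + 1) - ln (real n))) at_top"
    using eventually_ge_at_top[of 1] by eventually_elim (rule ln_stirling_ratio_Suc)
  ultimately have "(\<lambda>n. ln (stirling_ratio (Suc n)) - ln (stirling_ratio n)) \<in> O(\<lambda>n. inverse (real n ^ 2))"
    by (subst landau_o.big.in_cong) auto
  hence "summable (\<lambda>n. ln (stirling_ratio (Suc n)) - ln (stirling_ratio n))"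
    by (rule summable_comparison_test_bigo[rotated]) (simp add: inverse_power_summable)
  hence "convergent (\<lambda>n. ln (stirling_ratio n))" by (rule convergent_if_summable_diffs)
  then obtain L where "(\<lambda>n. ln (stirling_ratio n)) \<longlonglongrightarrow> L" by (auto simp: convergent_def)
  hence "(\<lambda>n. exp (ln (stirling_ratio n))) \<longlonglongrightarrow> exp L" by (rule tendsto_exp)
  moreover have "eventually (\<lambda>n. exp (ln (stirling_ratio n)) = stirling_ratio n) at_top"
    using eventually_ge_at_top[of 1] by eventually_elim (simp add: stirling_ratio_pos)
  ultimately have "stirling_ratio \<longlonglongrightarrow> exp L" by (rule Lim_transform_eventually)
  thus ?thesis using that by simp
qed

lemma power_mult_ratio_eq_exp:
  assumes "k > 0" "j > 0"
  shows "real k ^ (k*n) / real j ^ (j*n) = exp ((real k * ln (real k) - real j * ln (real j)) * real n)"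
proof -
  have "real k ^ (k*n) = exp (real (k*n) * ln (real k))" "real j ^ (j*n) = exp (real (j*n) * ln (real j))"
    using assms by (simp_all only: exp_of_nat_mult exp_ln of_nat_0_less_iff)
  thus ?thesis by (simp add: exp_diff[symmetric] algebra_simps)
qed

lemma choose_mult_stirling_ratio:
  fixes k j n :: nat
  assumes "k = j + 1" and "j \<ge> 1" and "n \<ge> 1"
  shows "real ((k*n) choose n) = stirling_ratio (k*n) / (stirling_ratio n * stirling_ratio (j*n))
           * sqrt (real k / real j) / sqrt (real n) * exp ((real k * ln (real k) - real j * ln (real j)) * real n)"
proof -
  define U where "U = real n / exp 1"
  have np: "real n > 0" and jp: "real j > 0" and kp: "real k > 0" using assms by auto
  have pos: "stirling_ratio n > 0" "stirling_ratio (j*n) > 0"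
    using assms by (auto intro!: stirling_ratio_pos)
  have "real ((k*n) choose n) = fact (k*n) / (fact n * fact (j*n))"
    using binomial_fact[of n "k*n"] assms by (simp add: algebra_simps)
  also have "fact (k*n) = stirling_ratio (k*n) * sqrt (real (k*n)) * (real k ^ (k*n) * U^n * U^(j*n))"
  proof -
    have "real (k*n) / exp 1 = real k * U" by (simp add: U_def)
    moreover have "U ^ (k*n) = U^n * U^(j*n)" using assms by (simp add: power_add algebra_simps)
    ultimately have "(real (k*n) / exp 1) ^ (k*n) = real k ^ (k*n) * U^n * U^(j*n)"
      by (simp add: power_mult_distrib)
    thus ?thesis using fact_eq_stirling_ratio[of "k*n"] assms by simp
  qed
  also have "fact n = stirling_ratio n * sqrt (real n) * U^n"
    using fact_eq_stirling_ratio assms by (simp add: U_def)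
  also have "fact (j*n) = stirling_ratio (j*n) * sqrt (real (j*n)) * (real j ^ (j*n) * U^(j*n))"
  proof -
    have "real (j*n) / exp 1 = real j * U" by (simp add: U_def)
    thus ?thesis using fact_eq_stirling_ratio[of "j*n"] assms by (simp add: power_mult_distrib)
  qed
  also have "stirling_ratio (k*n) * sqrt (real (k*n)) * (real k ^ (k*n) * U^n * U^(j*n)) /
      (stirling_ratio n * sqrt (real n) * U^n * (stirling_ratio (j*n) * sqrt (real (j*n)) * (real j ^ (j*n) * U^(j*n))))
    = stirling_ratio (k*n) / (stirling_ratio n * stirling_ratio (j*n))
      * (sqrt (real (k*n)) / (sqrt (real n) * sqrt (real (j*n)))) * (real k ^ (k*n) / real j ^ (j*n))"
    using pos np jp by (simp add: U_def field_simps)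
  also have "sqrt (real (k*n)) / (sqrt (real n) * sqrt (real (j*n))) = sqrt (real k / real j) / sqrt (real n)"
    using np jp by (simp add: real_sqrt_mult real_sqrt_divide field_simps)
  also have "real k ^ (k*n) / real j ^ (j*n) = exp ((real k * ln (real k) - real j * ln (real j)) * real n)"
    using assms by (intro power_mult_ratio_eq_exp) auto
  finally show ?thesis by simp
qed

lemma stirling_ratio_limit: "stirling_ratio \<longlonglongrightarrow> sqrt (2 * pi)"
proof -
  obtain S where S: "stirling_ratio \<longlonglongrightarrow> S" "S > 0" by (rule stirling_ratio_convergent)
  have "(\<lambda>n. stirling_ratio (2*n)) \<longlonglongrightarrow> S"
    using LIMSEQ_subseq_LIMSEQ[OF S(1), of "\<lambda>n. 2*n"] by (simp add: strict_mono_def o_def)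
  hence "(\<lambda>n. sqrt 2 * (stirling_ratio (2*n) / (stirling_ratio n * stirling_ratio n))) \<longlonglongrightarrow> sqrt 2 * (S / (S * S))"
    using S by (intro tendsto_intros) auto
  moreover have "eventually (\<lambda>n. sqrt 2 * (stirling_ratio (2*n) / (stirling_ratio n * stirling_ratio n))
                   = real ((2*n) choose n) * sqrt (real n) / 4 ^ n) at_top"
    using eventually_ge_at_top[of 1]
  proof eventually_elim
    case (elim n)
    have "exp ((real 2 * ln (real 2) - real 1 * ln (real 1)) * real n) = 4 ^ n"
      using power_mult_ratio_eq_exp[of 2 1 n] by (simp add: power_mult)
    hence "real ((2*n) choose n) = sqrt 2 * (stirling_ratio (2*n) / (stirling_ratio n * stirling_ratio n)) / sqrt (real n) * 4 ^ n"
      using choose_mult_stirling_ratio[of 2 1 n] elim by simp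
    thus ?case using elim by simp
  qed
  ultimately have "(\<lambda>n. real ((2*n) choose n) * sqrt (real n) / 4 ^ n) \<longlonglongrightarrow> sqrt 2 * (S / (S * S))"
    by (rule Lim_transform_eventually)
  hence "sqrt 2 * (S / (S * S)) = 1 / sqrt pi"
    using central_binomial_limit by (rule LIMSEQ_unique)
  hence "S = sqrt 2 * sqrt pi" using S(2) by (simp add: divide_simps)
  thus ?thesis using S(1) by (simp add: real_sqrt_mult)
qed

lemma choose_mult_asymp_equiv:
  fixes k j :: nat
  assumes "k = j + 1" and "j \<ge> 1"
  shows "(\<lambda>n. real ((k*n) choose n)) \<sim>[at_top]
           (\<lambda>n. sqrt (real k / (2 * pi * real j))
                * (exp ((real k * ln (real k) - real j * ln (real j)) * real n) / sqrt (real n)))"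
proof (rule asymp_equivI')
  let ?c = "real k * ln (real k) - real j * ln (real j)"
  have sm: "strict_mono (\<lambda>n. a * n)" if "a \<ge> 1" for a :: nat
    using that by (auto simp: strict_mono_def)
  have "(\<lambda>n. stirling_ratio (k*n)) \<longlonglongrightarrow> sqrt (2*pi)" "(\<lambda>n. stirling_ratio (j*n)) \<longlonglongrightarrow> sqrt (2*pi)"
    using LIMSEQ_subseq_LIMSEQ[OF stirling_ratio_limit sm[of k]]
          LIMSEQ_subseq_LIMSEQ[OF stirling_ratio_limit sm[of j]] assms
    by (simp_all add: o_def)
  hence "(\<lambda>n. sqrt (2*pi) * (stirling_ratio (k*n) / (stirling_ratio n * stirling_ratio (j*n))))
           \<longlonglongrightarrow> sqrt (2*pi) * (sqrt (2*pi) / (sqrt (2*pi) * sqrt (2*pi)))"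
    by (intro tendsto_intros stirling_ratio_limit) auto
  hence "(\<lambda>n. sqrt (2*pi) * (stirling_ratio (k*n) / (stirling_ratio n * stirling_ratio (j*n)))) \<longlonglongrightarrow> 1"
    by simp
  moreover have "eventually (\<lambda>n. sqrt (2*pi) * (stirling_ratio (k*n) / (stirling_ratio n * stirling_ratio (j*n)))
     = real ((k*n) choose n) / (sqrt (real k / (2 * pi * real j)) * (exp (?c * real n) / sqrt (real n)))) at_top"
    using eventually_ge_at_top[of 1]
  proof eventually_elim
    case (elim n)
    have "sqrt (real k / (2 * pi * real j)) = sqrt (real k / real j) / sqrt (2 * pi)"
      by (simp add: real_sqrt_divide real_sqrt_mult)
    thus ?case using choose_mult_stirling_ratio[OF assms elim] elim assms by simp
  qed
  ultimately show "((\<lambda>n. real ((k*n) choose n) / (sqrt (real k / (2 * pi * real j)) * (exp (?c * real n) / sqrt (real n)))) \<longlongrightarrow> 1) at_top"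
    by (rule Lim_transform_eventually)
qed

lemma binomial_term_le_one:
  fixes x y :: real
  assumes "x \<ge> 0" "y \<ge> 0" "x + y = 1" "i \<le> N"
  shows "real (N choose i) * x ^ i * y ^ (N - i) \<le> 1"
proof -
  have "real (N choose i) * x ^ i * y ^ (N - i) \<le> (\<Sum>k\<le>N. real (N choose k) * x ^ k * y ^ (N - k))"
    using assms by (intro member_le_sum) auto
  also have "\<dots> = (x + y) ^ N" by (rule binomial_ring[symmetric])
  finally show ?thesis using assms by simp
qed

lemma choose_mult_le_exp:
  fixes k j n :: nat
  assumes "k = j + 1" and "j \<ge> 1"
  shows "real ((k*n) choose n) \<le> exp ((real k * ln (real k) - real j * ln (real j)) * real n)"
proof -
  have k: "real k > 0" "real k = 1 + real j" "k*n - n = j*n" using assms by (auto simp: algebra_simps)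
  have "real ((k*n) choose n) * (1 / real k) ^ n * (real j / real k) ^ (j*n) \<le> 1"
    using binomial_term_le_one[of "1 / real k" "real j / real k" n "k*n"] k
    by (simp add: field_simps)
  hence "real ((k*n) choose n) * real j ^ (j*n) \<le> real k ^ n * real k ^ (j*n)"
    using k by (simp add: field_simps power_divide)
  also have "\<dots> = real k ^ (k*n)" using assms by (simp add: power_add[symmetric] algebra_simps)
  finally show ?thesis
    using power_mult_ratio_eq_exp[of k j n] assms by (simp add: field_simps)
qed

lemma mult_ln_less_mult_ln:
  fixes x y :: real
  assumes "1 \<le> x" "x < y"
  shows "x * ln x < y * ln y"
proof -
  have "x * ln x \<le> x * ln y" using assms by (intro mult_left_mono) auto
  also have "\<dots> < y * ln y" using assms by (intro mult_strict_right_mono) auto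
  finally show ?thesis .
qed

lemma abs_moebius_mu_le_1: "\<bar>real_of_int (moebius_mu n)\<bar> \<le> 1"
  by (simp add: moebius_mu_def)

lemma proper_divisor_sum_bound:
  fixes w :: "nat \<Rightarrow> real" and c :: real
  assumes "c \<ge> 0" and w: "\<And>d. \<bar>w d\<bar> \<le> exp (c * real d)" and "n \<ge> 1"
  shows "\<bar>\<Sum>d | d dvd n \<and> d \<noteq> n. w d\<bar> \<le> real n * exp (c * real n / 2)"
proof -
  let ?D = "{d. d dvd n \<and> d \<noteq> n}"
  have "?D \<subseteq> {1..n}" using assms by (auto intro: dvd_imp_le dest: dvd_0_left)
  hence card: "card ?D \<le> n" using card_mono[of "{1..n}" ?D] by auto
  have half: "exp (c * real d) \<le> exp (c * real n / 2)" if "d \<in> ?D" for d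
  proof -
    from that obtain q where q: "n = d * q" and "q \<noteq> 1" by auto
    moreover have "q \<noteq> 0" using q assms by auto
    ultimately have "2 * d \<le> n" using mult_le_mono2[of 2 q d] by (simp add: mult.commute)
    thus ?thesis using assms by (simp add: field_simps mult_left_mono)
  qed
  have "\<bar>\<Sum>d\<in>?D. w d\<bar> \<le> (\<Sum>d\<in>?D. exp (c * real n / 2))"
  proof (intro order_trans[OF sum_abs] sum_mono)
    fix d assume "d \<in> ?D"
    thus "\<bar>w d\<bar> \<le> exp (c * real n / 2)" using w[of d] half[of d] by linarith
  qed
  also have "\<dots> \<le> real n * exp (c * real n / 2)" using card by (simp add: mult_right_mono)
  finally show ?thesis .
qed

lemma herd_binomial_params:
  fixes m :: nat
  assumes "m \<ge> 3"
  shows "(m - 1)^2 = m * (m - 2) + 1" and "m * (m - 2) \<ge> 1"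
proof -
  obtain t where "m = t + 3" using assms by (metis add.commute le_Suc_ex)
  thus "(m - 1)^2 = m * (m - 2) + 1" "m * (m - 2) \<ge> 1" by (simp_all add: power2_eq_square algebra_simps)
qed

lemma c_herd_pos:
  assumes "m \<ge> 3"
  shows "c_herd m > 0"
proof -
  have "real (m * (m - 2)) * ln (real (m * (m - 2))) < real (m * (m - 2) + 1) * ln (real (m * (m - 2) + 1))"
  proof (rule mult_ln_less_mult_ln)
    show "1 \<le> real (m * (m - 2))" using herd_binomial_params(2)[OF assms] by (metis of_nat_1 of_nat_le_iff)
  qed simp
  thus ?thesis unfolding c_herd_def herd_binomial_params(1)[OF assms] by linarith
qed

definition herd_tail :: "nat \<Rightarrow> nat \<Rightarrow> real" where
  "herd_tail m n = (\<Sum>d | d dvd n \<and> d \<noteq> n. (-1) ^ (m*n+1) * (-1) ^ (m*d+1)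
                      * real_of_int (moebius_mu (n div d)) * real (((m-1)^2 * d) choose d))"

lemma Omega_herd_eq:
  assumes "n \<ge> 1"
  shows "Omega_herd m n = (-1) ^ (m*n+1) * (real m / (real ((m-1)^2) * real n ^ 2)) *
           (real (((m-1)^2 * n) choose n) + herd_tail m n)"
proof -
  have "{d. d dvd n} = insert n {d. d dvd n \<and> d \<noteq> n}" by auto
  moreover have "finite {d. d dvd n \<and> d \<noteq> n}"
    using assms by (intro finite_subset[OF _ finite_divisors_nat[of n]]) auto
  moreover have "moebius_mu (n div n) = 1" using assms by (simp add: moebius_mu_def)
  moreover have "(-1::real) ^ (m*n+1) * (-1) ^ (m*n+1) = 1"
    by (simp add: power_add[symmetric] power_mult_distrib[symmetric])
  ultimately show ?thesis
    by (simp add: Omega_herd_def herd_tail_def sum.insert sum_distrib_left algebra_simps)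
qed

lemma herd_tail_bound:
  assumes "m \<ge> 3" "n \<ge> 1"
  shows "\<bar>herd_tail m n\<bar> \<le> real n * exp (c_herd m * real n / 2)"
  unfolding herd_tail_def
proof (rule proper_divisor_sum_bound[OF less_imp_le[OF c_herd_pos[OF assms(1)]] _ assms(2)])
  fix d
  have "\<bar>real_of_int (moebius_mu (n div d))\<bar> * real (((m-1)^2 * d) choose d) \<le> real (((m-1)^2 * d) choose d)"
    using abs_moebius_mu_le_1 by (intro mult_left_le_one_le) auto
  also have "\<dots> \<le> exp (c_herd m * real d)"
    using choose_mult_le_exp[OF herd_binomial_params[OF assms(1)], of d] by (simp add: c_herd_def)
  moreover have "\<bar>(-1::real) ^ (m*n+1)\<bar> * \<bar>(-1) ^ (m*d+1)\<bar> = 1" by (simp add: power_abs)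
  ultimately show "\<bar>(-1) ^ (m*n+1) * (-1) ^ (m*d+1) * real_of_int (moebius_mu (n div d))
                  * real (((m-1)^2 * d) choose d)\<bar> \<le> exp (c_herd m * real d)"
    by (simp only: abs_mult abs_of_nat mult_1_left)
qed

lemma herd_tail_smallo:
  assumes "m \<ge> 3"
  shows "herd_tail m \<in> o(\<lambda>n. exp (c_herd m * real n) / sqrt (real n))"
proof -
  have "eventually (\<lambda>n. norm (herd_tail m n) \<le> 1 * norm (real n * exp (c_herd m * real n / 2))) at_top"
    using eventually_ge_at_top[of 1] by eventually_elim (simp add: herd_tail_bound[OF assms])
  hence "herd_tail m \<in> O(\<lambda>n. real n * exp (c_herd m * real n / 2))" by (rule bigoI)
  moreover have "(\<lambda>n. real n * exp (c * real n / 2)) \<in> o(\<lambda>n. exp (c * real n) / sqrt (real n))"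
    if "c > 0" for c :: real
    using that by real_asymp
  ultimately show ?thesis using c_herd_pos[OF assms] by (blast intro: landau_o.big_small_trans)
qed

lemma herd_prefactor:
  fixes M :: real
  assumes "M > 2"
  shows "M / (M - 1)^2 * sqrt ((M - 1)^2 / (2 * pi * (M * (M - 2))))
           = 1 / (M - 1) * sqrt (M / (2 * pi * (M - 2)))"
proof -
  define b where "b = sqrt (2 * pi * (M - 2))"
  have b: "b > 0" using assms by (simp add: b_def)
  have "sqrt ((M - 1)^2 / (2 * pi * (M * (M - 2)))) = (M - 1) / (sqrt M * b)"
    using assms by (simp add: b_def real_sqrt_divide real_sqrt_mult ac_simps)
  moreover have "sqrt (M / (2 * pi * (M - 2))) = sqrt M / b" by (simp add: b_def real_sqrt_divide)
  moreover have cancel: "r * r / a^2 * (a / (r * b)) = 1 / a * (r / b)" if "r > 0" "a > 0" for r a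
    using that b by (simp add: field_simps power2_eq_square)
  ultimately show ?thesis using assms cancel[of "sqrt M" "M - 1"] by simp
qed

lemma powr_minus_five_halves:
  fixes x :: real
  assumes "x > 0"
  shows "x powr (-5/2) = 1 / (x^2 * sqrt x)"
proof -
  have "x powr (5/2) = x powr 2 * x powr (1/2)" by (simp add: powr_add[symmetric])
  also have "\<dots> = x^2 * sqrt x" using assms by (simp add: powr_half_sqrt)
  finally show ?thesis by (simp add: powr_minus_divide)
qed

lemma herd_leading_term:
  assumes "m \<ge> 3" "n \<ge> 1"
  shows "real m / (real ((m-1)^2) * real n ^ 2)
           * (sqrt (real ((m-1)^2) / (2 * pi * real (m * (m - 2)))) * (exp (c_herd m * real n) / sqrt (real n)))
         = 1 / real (m - 1) * sqrt (real m / (2 * pi * real (m - 2))) * real n powr (-5/2) * exp (c_herd m * real n)"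
proof -
  have regroup: "a / (b * x) * (q * (e / y)) = a / b * q * (1 / (x * y)) * e" for a b q x y e :: real
    by (simp add: divide_inverse mult_ac)
  have "real ((m-1)^2) = (real m - 1)^2" "real (m * (m - 2)) = real m * (real m - 2)"
       "real (m - 1) = real m - 1" "real (m - 2) = real m - 2"
    using assms by (simp_all add: of_nat_diff)
  hence prefactor: "real m / real ((m-1)^2) * sqrt (real ((m-1)^2) / (2 * pi * real (m * (m - 2))))
                      = 1 / real (m - 1) * sqrt (real m / (2 * pi * real (m - 2)))"
    using herd_prefactor[of "real m"] assms by simp
  have "real n powr (-5/2) = 1 / (real n ^ 2 * sqrt (real n))"
    using assms by (intro powr_minus_five_halves) simp
  thus ?thesis unfolding regroup prefactor by simp
qed

theorem proposition3p3:
  fixes m :: nat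
  assumes "m \<ge> 3"
  shows "Omega_herd m \<sim>[at_top]
           (\<lambda>n. (-1) ^ (m * n + 1) * (1 / real (m - 1) * sqrt (real m / (2 * pi * real (m - 2))))
                 * real n powr (-5/2) * exp (c_herd m * real n))"
proof -
  define K where "K = sqrt (real ((m-1)^2) / (2 * pi * real (m * (m - 2))))"
  define B where "B n = K * (exp (c_herd m * real n) / sqrt (real n))" for n
  define s :: "nat \<Rightarrow> real" where "s n = (-1) ^ (m * n + 1) * (real m / (real ((m-1)^2) * real n ^ 2))" for n
  have "K \<noteq> 0" using assms herd_binomial_params(2)[OF assms] by (simp add: K_def)
  hence "herd_tail m \<in> o(B)"
    unfolding B_def by (subst landau_o.small.cmult) (use herd_tail_smallo[OF assms] in auto)
  moreover have "(\<lambda>n. real (((m-1)^2 * n) choose n)) \<sim>[at_top] B"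
    unfolding B_def K_def c_herd_def by (rule choose_mult_asymp_equiv[OF herd_binomial_params[OF assms]])
  ultimately have "(\<lambda>n. s n * (real (((m-1)^2 * n) choose n) + herd_tail m n)) \<sim>[at_top] (\<lambda>n. s n * B n)"
    by (intro asymp_equiv_intros) (simp add: asymp_equiv_add_right)
  moreover have "eventually (\<lambda>n. s n * (real (((m-1)^2 * n) choose n) + herd_tail m n) = Omega_herd m n) at_top"
    using eventually_ge_at_top[of 1] by eventually_elim (simp add: Omega_herd_eq s_def)
  moreover have "eventually (\<lambda>n. s n * B n = (-1) ^ (m * n + 1)
                   * (1 / real (m - 1) * sqrt (real m / (2 * pi * real (m - 2))))
                   * real n powr (-5/2) * exp (c_herd m * real n)) at_top"
    using eventually_ge_at_top[of 1]
    by eventually_elim (simp only: s_def B_def K_def mult.assoc herd_leading_term[OF assms, unfolded mult.assoc])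
  ultimately show ?thesis by (rule asymp_equiv_transfer)
qed

end
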